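(* Let $\alpha,\beta\in(0,1)$, $\gamma>0$, $m=\alpha n^\beta$, and $\lambda^*=\frac{\gamma}{1-\beta}$. Then for all $\lambda<\lambda^*$, $$\lim_{n\to\infty}\frac{\sum_{1\le j\le\lambda m/\log_2 n}\binom{n}{j}}{2^{\gamma m}}=0.$$ *)

theory Defs
  imports Complex_Main
begin

end

theory Submission imports Defs "HOL-Real_Asymp.Real_Asymp" begin

text \<open>With \<open>m = \<alpha> n\<^sup>\<beta>\<close> and \<open>K = \<lambda> m / log\<^sub>2 n\<close>, the partial binomial sum up to \<open>K\<close>
  is at most \<open>(e n / K)\<^sup>K = 2 powr (K log\<^sub>2 (e n / K))\<close> and \<open>K log\<^sub>2 (e n / K) \<sim> (1 - \<beta>) \<lambda> m\<close>.
  For \<open>\<lambda> (1 - \<beta>) < \<gamma>\<close> this is eventually smaller than \<open>\<gamma> m\<close> by a positive multiple of \<open>m\<close>,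
  so the quotient tends to zero. Smaller \<open>\<lambda>\<close> only shrink the sum, so we may assume \<open>\<lambda> > 0\<close>.\<close>

lemma sum_binomial_le_powr:
  fixes K :: real and n :: nat
  assumes "0 < K" "K \<le> real n"
  shows "(\<Sum>j | real j \<le> K. real (n choose j)) \<le> (exp 1 * n / K) powr K"
proof -
  define x where "x = K / n"
  have n: "real n > 0" using assms by linarith
  have x: "0 < x" "x \<le> 1" using assms n by (auto simp: x_def)
  let ?S = "{j. real j \<le> K}"
  have S_le_n: "?S \<subseteq> {..n}" using assms by auto
  \<comment> \<open>Chernoff's trick: \<open>x\<^sup>j / x\<^sup>K \<ge> 1\<close> for \<open>j \<le> K\<close>, since \<open>x \<le> 1\<close>.\<close>
  have "(\<Sum>j\<in>?S. real (n choose j)) \<le> (\<Sum>j\<in>?S. real (n choose j) * x ^ j) / x powr K"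
    unfolding sum_divide_distrib
  proof (rule sum_mono)
    fix j assume "j \<in> ?S"
    hence "x powr K \<le> x ^ j"
      using x by (simp add: powr_mono' flip: powr_realpow)
    thus "real (n choose j) \<le> real (n choose j) * x ^ j / x powr K"
      using x by (simp add: le_divide_eq mult_left_mono)
  qed
  also have "\<dots> \<le> (\<Sum>j\<le>n. real (n choose j) * x ^ j) / x powr K"
    using S_le_n x by (intro divide_right_mono sum_mono2) auto
  also have "(\<Sum>j\<le>n. real (n choose j) * x ^ j) = (1 + x) ^ n"
    using binomial_ring[of x 1 n] by (simp add: add.commute mult.commute)
  also have "(1 + x) ^ n \<le> exp x ^ n"
    using x by (intro power_mono) (auto simp: add.commute)
  also have "exp x ^ n = exp K"
    using n by (simp add: x_def flip: exp_of_nat_mult)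
  also have "exp K / x powr K = (exp 1 * n / K) powr K"
    using assms n by (simp add: x_def powr_def exp_diff exp_add ln_div ln_mult algebra_simps)
  finally show ?thesis
    using x by (simp add: divide_right_mono)
qed

lemma sum_binomial_div_powr_le_exp:
  fixes K c t :: real and n :: nat
  assumes "0 < K" "K \<le> real n" "c \<le> K"
  shows "(\<Sum>j | 1 \<le> j \<and> real j \<le> c. real (n choose j)) / 2 powr t
           \<le> exp (K * ln (exp 1 * n / K) - t * ln 2)"
proof -
  have "finite {j. real j \<le> K}"
    by (rule finite_subset[of _ "{..n}"]) (use assms in auto)
  hence "(\<Sum>j | 1 \<le> j \<and> real j \<le> c. real (n choose j)) \<le> (\<Sum>j | real j \<le> K. real (n choose j))"
    using assms(3) by (intro sum_mono2) auto
  also have "\<dots> \<le> (exp 1 * n / K) powr K"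
    using assms(1,2) by (rule sum_binomial_le_powr)
  finally show ?thesis
    using assms by (simp add: divide_right_mono powr_def exp_diff mult.commute)
qed

lemma exp_binomial_tail_exponent_tendsto_zero:
  fixes \<alpha> \<beta> \<gamma> l :: real
  assumes "0 < \<alpha>" "0 < \<beta>" "\<beta> < 1" "0 < l" "l * (1 - \<beta>) < \<gamma>"
  defines "K \<equiv> \<lambda>n::nat. l * \<alpha> * real n powr \<beta> / log 2 (real n)"
  shows "(\<lambda>n. exp (K n * ln (exp 1 * real n / K n) - \<gamma> * \<alpha> * real n powr \<beta> * ln 2))
           \<longlonglongrightarrow> 0"
  unfolding K_def using assms by real_asymp

lemma eventually_binomial_tail_quotient_le_exp:
  fixes \<alpha> \<beta> \<gamma> l lam :: real
  assumes "0 < \<alpha>" "0 < \<beta>" "\<beta> < 1" "0 < l" "lam \<le> l"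
  defines "K \<equiv> \<lambda>n::nat. l * \<alpha> * real n powr \<beta> / log 2 (real n)"
  shows "\<forall>\<^sub>F n in sequentially. (let m = \<alpha> * real n powr \<beta> in
            (\<Sum>j | 1 \<le> j \<and> real j \<le> lam * m / log 2 (real n). real (n choose j))
              / 2 powr (\<gamma> * m))
          \<le> exp (K n * ln (exp 1 * real n / K n) - \<gamma> * \<alpha> * real n powr \<beta> * ln 2)"
proof -
  have "filterlim (\<lambda>n. real n - K n) at_top sequentially"
    unfolding K_def using assms(1-4) by real_asymp
  hence "\<forall>\<^sub>F n in sequentially. 0 \<le> real n - K n"
    unfolding filterlim_at_top by blast
  hence "\<forall>\<^sub>F n in sequentially. 2 \<le> n \<and> K n \<le> real n"
    using eventually_ge_at_top[of 2] by eventually_elim simp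
  thus ?thesis
  proof eventually_elim
    case (elim n)
    hence "0 < K n" "lam * (\<alpha> * real n powr \<beta>) / log 2 (real n) \<le> K n"
      using assms by (auto simp: K_def intro!: divide_right_mono mult_right_mono)
    from sum_binomial_div_powr_le_exp[OF this(1) _ this(2), where t = "\<gamma> * (\<alpha> * real n powr \<beta>)"]
    show ?case
      using elim by (simp add: Let_def mult.assoc)
  qed
qed

theorem lemma9:
  fixes \<alpha> \<beta> \<gamma> lam :: real
  assumes "0 < \<alpha>" "\<alpha> < 1" "0 < \<beta>" "\<beta> < 1" "0 < \<gamma>"
    and "lam < \<gamma> / (1 - \<beta>)"
  shows "((\<lambda>n::nat. let m = \<alpha> * real n powr \<beta> in
            (\<Sum>j\<in>{j::nat. 1 \<le> j \<and> real j \<le> lam * m / log 2 (real n)}. real (n choose j))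
              / 2 powr (\<gamma> * m)) \<longlongrightarrow> 0) sequentially" (is "(?f \<longlongrightarrow> 0) _")
proof -
  define l where "l = max lam (\<gamma> / (2 * (1 - \<beta>)))"
  have "0 < \<gamma> / (2 * (1 - \<beta>))" "\<gamma> / (2 * (1 - \<beta>)) < \<gamma> / (1 - \<beta>)"
    using assms by (auto simp: field_simps)
  hence l: "0 < l" "lam \<le> l" "l < \<gamma> / (1 - \<beta>)"
    using assms(6) by (auto simp: l_def)
  hence l_small: "l * (1 - \<beta>) < \<gamma>"
    using assms(4) by (simp add: pos_less_divide_eq)
  have "\<forall>\<^sub>F n in sequentially. 0 \<le> ?f n"
    by (auto simp: Let_def intro!: always_eventually sum_nonneg divide_nonneg_nonneg)
  from tendsto_sandwich[OF this
      eventually_binomial_tail_quotient_le_exp[OF assms(1,3,4) l(1,2)] tendsto_const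
      exp_binomial_tail_exponent_tendsto_zero[OF assms(1,3,4) l(1) l_small]]
  show ?thesis .
qed

end
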